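(* Suppose there is a polynomial $p_2$ such that for every $d\ge 2$, every Boolean matrix $M\in\{0,1\}^{n\times m}$ ($n,m\ge1$) of rank at most $d$ contains a submatrix $M|_{S\times T}$ ($S\subseteq[n]$, $T\subseteq[m]$) in which every column is constant and $|S||T|\ge nm\cdot 2^{-p_2(\log d)}$. Then for every integer $k\ge 2$ there is a polynomial $p_k$ such that for every $d\ge 2$, every $k$-listable real matrix $M\in\mathbb R^{n\times m}$ of rank at most $d$ contains a $1$-listable submatrix $M|_{S\times T}$ with $|S||T|\ge nm\cdot 2^{-p_k(\log d)}$.
   Context: A real matrix is $k$-listable if every column contains at most $k$ distinct entries; $1$-listable means every column is constant. For $S\subseteq[n]$, $T\subseteq[m]$, $M|_{S\times T}$ is the submatrix with rows $S$ and columns $T$, of size $|S||T|$. Logarithms are base 2. *)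

theory Defs
  imports "Jordan_Normal_Form.DL_Rank" "HOL-Computational_Algebra.Polynomial"
begin

definition mrank :: "real mat \<Rightarrow> nat" where
  "mrank M = vec_space.rank (dim_row M) M"

definition listable :: "nat \<Rightarrow> real mat \<Rightarrow> bool" where
  "listable k M \<longleftrightarrow> (\<forall>j < dim_col M. card {M $$ (i, j) | i. i < dim_row M} \<le> k)"

definition sub_listable1 :: "real mat \<Rightarrow> nat set \<Rightarrow> nat set \<Rightarrow> bool" where
  "sub_listable1 M S T \<longleftrightarrow> (\<forall>j\<in>T. \<forall>i\<in>S. \<forall>i'\<in>S. M $$ (i, j) = M $$ (i', j))"

definition boolean_mat :: "real mat \<Rightarrow> bool" where
  "boolean_mat M \<longleftrightarrow> (\<forall>i < dim_row M. \<forall>j < dim_col M. M $$ (i, j) \<in> {0, 1})"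

end

(*
  Induction on k.  Fix a row i0 and put v j = M i0 j.  Since column j takes at most k values,
  the 0/1 matrix B i j = [M i j = v j] is the entrywise product, over the other values w of
  column j, of the column-affine functions (M i j - w) / (v j - w); entrywise products
  multiply ranks and column-affine maps add one, so B has rank at most (d + 1)^(k - 1).
  The Boolean hypothesis yields a rectangle S x T on which B is column-constant.  On the
  columns of T where B is 1 the matrix M itself is constant on S; on the remaining columns M
  avoids v j on S, so there it is (k - 1)-listable and the induction hypothesis applies.
  Keeping the larger half of T costs a factor 2 per round, so after k rounds the density is
  at least 2^(-k (1 + p2 (k log (d + 1)))) >= 2^(-pk (log d)) for a polynomial pk.
*)
theory Submission
  imports Defs
begin

definition rank_at_most :: "nat \<Rightarrow> 'i set \<Rightarrow> 'j set \<Rightarrow> ('i \<Rightarrow> 'j \<Rightarrow> 'a::comm_semiring_1) \<Rightarrow> bool" where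
  "rank_at_most r R C F \<longleftrightarrow> (\<exists>U V. \<forall>i\<in>R. \<forall>j\<in>C. F i j = (\<Sum>l<r. U i l * V l j))"

lemma rank_at_most_cong:
  assumes "rank_at_most r R C F" "\<And>i j. i \<in> R \<Longrightarrow> j \<in> C \<Longrightarrow> G i j = F i j"
  shows "rank_at_most r R C G"
  using assms unfolding rank_at_most_def by metis

lemma rank_at_most_reindex:
  assumes "rank_at_most r R C F" "g ` A \<subseteq> R" "h ` B \<subseteq> C"
  shows "rank_at_most r A B (\<lambda>i j. F (g i) (h j))"
proof -
  obtain U V where "\<forall>i\<in>R. \<forall>j\<in>C. F i j = (\<Sum>l<r. U i l * V l j)"
    using assms(1) unfolding rank_at_most_def by blast
  then have "\<forall>i\<in>A. \<forall>j\<in>B. F (g i) (h j) = (\<Sum>l<r. U (g i) l * V l (h j))"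
    using assms(2,3) by blast
  then show ?thesis
    unfolding rank_at_most_def by (intro exI[of _ "\<lambda>i. U (g i)"] exI[of _ "\<lambda>l j. V l (h j)"])
qed

lemma rank_at_most_subset:
  assumes "rank_at_most r R C F" "R' \<subseteq> R" "C' \<subseteq> C"
  shows "rank_at_most r R' C' F"
  using assms unfolding rank_at_most_def by blast

lemma rank_at_most_mono:
  assumes "rank_at_most r R C F" "r \<le> r'"
  shows "rank_at_most r' R C F"
proof -
  obtain U V where F: "\<forall>i\<in>R. \<forall>j\<in>C. F i j = (\<Sum>l<r. U i l * V l j)"
    using assms(1) unfolding rank_at_most_def by blast
  define V' where "V' l j = (if l < r then V l j else 0)" for l j
  have "(\<Sum>l<r'. U i l * V' l j) = (\<Sum>l<r. U i l * V' l j)" for i j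
    by (rule sum.mono_neutral_right) (use assms(2) in \<open>auto simp: V'_def\<close>)
  then have "(\<Sum>l<r'. U i l * V' l j) = (\<Sum>l<r. U i l * V l j)" for i j
    by (simp add: V'_def)
  then show ?thesis using F unfolding rank_at_most_def by metis
qed

lemma sum_lessThan_mult_div_mod:
  fixes g :: "nat \<Rightarrow> 'a::comm_monoid_add"
  shows "(\<Sum>q<r * s. g q) = (\<Sum>l<r. \<Sum>l'<s. g (l * s + l'))"
  by (simp add: sum.nat_group[symmetric] sum.atLeastLessThan_shift_0 atLeast0LessThan add.commute)

lemma rank_at_most_mult:
  assumes "rank_at_most r R C F" "rank_at_most s R C G"
  shows "rank_at_most (r * s) R C (\<lambda>i j. F i j * G i j)"
proof -
  obtain U V where F: "\<forall>i\<in>R. \<forall>j\<in>C. F i j = (\<Sum>l<r. U i l * V l j)"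
    using assms(1) unfolding rank_at_most_def by blast
  obtain U' V' where G: "\<forall>i\<in>R. \<forall>j\<in>C. G i j = (\<Sum>l<s. U' i l * V' l j)"
    using assms(2) unfolding rank_at_most_def by blast
  define U'' where "U'' i q = U i (q div s) * U' i (q mod s)" for i q
  define V'' where "V'' q j = V (q div s) j * V' (q mod s) j" for q j
  have "F i j * G i j = (\<Sum>q<r * s. U'' i q * V'' q j)" if "i \<in> R" "j \<in> C" for i j
  proof (cases "s = 0")
    case False
    have "F i j * G i j = (\<Sum>l<r. \<Sum>l'<s. (U i l * V l j) * (U' i l' * V' l' j))"
      using F G that by (simp add: sum_product)
    also have "\<dots> = (\<Sum>q<r * s. U'' i q * V'' q j)"
      using False by (simp add: sum_lessThan_mult_div_mod U''_def V''_def mult_ac)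
    finally show ?thesis .
  qed (use G that in simp)
  then show ?thesis unfolding rank_at_most_def by blast
qed

lemma rank_at_most_affine_cols:
  assumes "rank_at_most r R C F"
  shows "rank_at_most (Suc r) R C (\<lambda>i j. a j * F i j + b j)"
proof -
  obtain U V where F: "\<forall>i\<in>R. \<forall>j\<in>C. F i j = (\<Sum>l<r. U i l * V l j)"
    using assms unfolding rank_at_most_def by blast
  define U' where "U' i l = (if l < r then U i l else 1)" for i l
  define V' where "V' l j = (if l < r then a j * V l j else b j)" for l j
  have "a j * F i j + b j = (\<Sum>l<Suc r. U' i l * V' l j)" if "i \<in> R" "j \<in> C" for i j
    using F that by (simp add: U'_def V'_def sum_distrib_left mult_ac)
  then show ?thesis unfolding rank_at_most_def by blast
qed

lemma rank_at_most_prod_affine: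
  assumes "rank_at_most r R C F"
  shows "rank_at_most (Suc r ^ t) R C (\<lambda>i j. \<Prod>l<t. a l j * F i j + b l j)"
proof (induction t)
  case 0
  have "\<forall>i\<in>R. \<forall>j\<in>C. (\<Prod>l<0. a l j * F i j + b l j) = (\<Sum>l<Suc r ^ 0. 1 * 1)" by simp
  then show ?case
    unfolding rank_at_most_def by (intro exI[of _ "\<lambda>i l. 1"] exI[of _ "\<lambda>l j. 1"])
next
  case (Suc t)
  show ?case
    using rank_at_most_mult[OF Suc.IH rank_at_most_affine_cols[OF assms, of "a t" "b t"]]
    by (simp add: mult.commute)
qed

lemma rank_at_most_prod_affine_over:
  assumes "rank_at_most r R C F" "\<And>j. j \<in> C \<Longrightarrow> finite (W j) \<and> card (W j) \<le> t"
  shows "rank_at_most (Suc r ^ t) R C (\<lambda>i j. \<Prod>w\<in>W j. a w j * F i j + b w j)"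
proof -
  have "\<exists>e. bij_betw e {..<card (W j)} (W j)" if "j \<in> C" for j
    using ex_bij_betw_nat_finite[of "W j"] assms(2)[OF that] by (auto simp: atLeast0LessThan)
  then obtain e where e: "\<And>j. j \<in> C \<Longrightarrow> bij_betw (e j) {..<card (W j)} (W j)" by metis
  define a' where "a' l j = (if l < card (W j) then a (e j l) j else 0)" for l j
  define b' where "b' l j = (if l < card (W j) then b (e j l) j else 1)" for l j
  have "(\<Prod>w\<in>W j. a w j * F i j + b w j) = (\<Prod>l<t. a' l j * F i j + b' l j)" if "j \<in> C" for i j
  proof -
    have "(\<Prod>w\<in>W j. a w j * F i j + b w j) = (\<Prod>l<card (W j). a (e j l) j * F i j + b (e j l) j)"
      using prod.reindex_bij_betw[OF e[OF that], of "\<lambda>w. a w j * F i j + b w j"] by simp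
    also have "\<dots> = (\<Prod>l<card (W j). a' l j * F i j + b' l j)"
      by (simp add: a'_def b'_def)
    also have "\<dots> = (\<Prod>l<t. a' l j * F i j + b' l j)"
      by (rule prod.mono_neutral_left) (use assms(2)[OF that] in \<open>auto simp: a'_def b'_def\<close>)
    finally show ?thesis .
  qed
  then show ?thesis
    by (intro rank_at_most_cong[OF rank_at_most_prod_affine[OF assms(1)]])
qed

lemma rank_at_most_eq_indicator:
  fixes F :: "'i \<Rightarrow> 'j \<Rightarrow> 'a::field"
  assumes "rank_at_most r R C F" "finite R"
    and "\<And>j. j \<in> C \<Longrightarrow> v j \<in> (\<lambda>i. F i j) ` R"
    and "\<And>j. j \<in> C \<Longrightarrow> card ((\<lambda>i. F i j) ` R) \<le> Suc t"
  shows "rank_at_most (Suc r ^ t) R C (\<lambda>i j. if F i j = v j then 1 else 0 :: 'a)"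
proof -
  define W where "W j = (\<lambda>i. F i j) ` R - {v j}" for j
  have W: "finite (W j) \<and> card (W j) \<le> t" if "j \<in> C" for j
    using assms(2) assms(3,4)[OF that] by (simp add: W_def card_Diff_singleton)
  have indicator: "(if F i j = v j then 1 else 0) = (\<Prod>w\<in>W j. 1 / (v j - w) * F i j + - w / (v j - w))"
    if "i \<in> R" for i j
  proof -
    have factor: "1 / (v j - w) * F i j + - w / (v j - w) = (F i j - w) / (v j - w)" for w
      by (simp add: diff_divide_distrib)
    have "finite (W j)" using assms(2) by (simp add: W_def)
    moreover have "F i j \<in> W j" if "F i j \<noteq> v j" using that \<open>i \<in> R\<close> by (simp add: W_def)
    moreover have "v j - w \<noteq> 0" if "w \<in> W j" for w using that by (auto simp: W_def)
    ultimately show ?thesis unfolding factor by (auto intro: prod_zero)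
  qed
  have "rank_at_most (Suc r ^ t) R C (\<lambda>i j. \<Prod>w\<in>W j. 1 / (v j - w) * F i j + - w / (v j - w))"
    using W by (rule rank_at_most_prod_affine_over[OF assms(1)])
  then show ?thesis by (rule rank_at_most_cong) (use indicator in blast)
qed

lemma (in vec_space) col_in_span_maximal_indpt:
  assumes M: "M \<in> carrier_mat n m" and S: "maximal S (\<lambda>T. T \<subseteq> set (cols M) \<and> lin_indpt T)"
    and j: "j < m"
  shows "col M j \<in> span S"
proof -
  have SM: "S \<subseteq> set (cols M)" "lin_indpt S" using S unfolding maximal_def by auto
  have cols: "set (cols M) \<subseteq> carrier_vec n" using M cols_dim by blast
  have cj: "col M j \<in> set (cols M)" using j M by (simp add: cols_def)
  have Sc: "S \<subseteq> carrier_vec n" using SM(1) cols by (rule order_trans)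
  have cjc: "col M j \<in> carrier_vec n" using cj cols by (rule subsetD[rotated])
  show ?thesis
  proof (cases "col M j \<in> S")
    case True
    then show ?thesis using Sc by (rule span_mem[rotated])
  next
    case False
    have "S \<union> {col M j} \<noteq> S" using False by auto
    moreover have "S \<union> {col M j} \<subseteq> set (cols M)" using SM(1) cj by simp
    ultimately have "lin_dep (S \<union> {col M j})"
      using S unfolding maximal_def by (meson Un_upper1)
    then show ?thesis using lin_dep_iff_in_span[OF Sc SM(2) cjc False] by simp
  qed
qed

lemma (in vec_space) rank_factorization:
  assumes M: "M \<in> carrier_mat n m"
  shows "\<exists>U V. \<forall>i<n. \<forall>j<m. M $$ (i,j) = (\<Sum>l<rank M. U i l * V l j)"
proof -
  have "lin_indpt {}"
    by (metis empty_subsetI fin_dim finite_basis_exists subset_li_is_li vec_vs vectorspace.basis_def)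
  then obtain S where S: "finite S" "maximal S (\<lambda>T. T \<subseteq> set (cols M) \<and> lin_indpt T)"
    using maximal_exists_superset[of "set (cols M)" "\<lambda>T. T \<subseteq> set (cols M) \<and> lin_indpt T" "{}"]
    by auto
  have "S \<subseteq> set (cols M)" using S(2) unfolding maximal_def by blast
  then have Sc: "S \<subseteq> carrier_vec n" using M cols_dim by blast
  have "\<exists>a A. col M j = lincomb a A \<and> finite A \<and> A \<subseteq> S" if "j < m" for j
    using col_in_span_maximal_indpt[OF M S(2) that] in_spanE by blast
  then obtain a A where aA: "\<And>j. j < m \<Longrightarrow> col M j = lincomb (a j) (A j) \<and> finite (A j) \<and> A j \<subseteq> S"
    by metis
  obtain e where e: "bij_betw e {..<card S} S"
    using ex_bij_betw_nat_finite[OF S(1)] by (auto simp: atLeast0LessThan)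
  define U where "U i l = e l $ i" for i l
  define V where "V l j = (if e l \<in> A j then a j (e l) else 0)" for l j
  have "M $$ (i,j) = (\<Sum>l<card S. U i l * V l j)" if i: "i < n" and j: "j < m" for i j
  proof -
    have "M $$ (i,j) = col M j $ i" using i j M by auto
    also have "\<dots> = lincomb (a j) (A j) $ i" using aA[OF j] by metis
    also have "\<dots> = (\<Sum>v\<in>A j. a j v * v $ i)"
      using i aA[OF j] Sc by (intro lincomb_index) blast+
    also have "\<dots> = (\<Sum>v\<in>S. (if v \<in> A j then a j v else 0) * v $ i)"
      using aA[OF j] S(1) by (intro sum.mono_neutral_cong_left) auto
    also have "\<dots> = (\<Sum>l<card S. U i l * V l j)"
      using sum.reindex_bij_betw[OF e, of "\<lambda>v. (if v \<in> A j then a j v else 0) * v $ i"]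
      by (simp add: U_def V_def mult.commute)
    finally show ?thesis .
  qed
  then show ?thesis unfolding rank_card_indpt[OF M S(2)] by blast
qed

lemma rank_at_most_of_mrank:
  assumes "mrank M \<le> d"
  shows "rank_at_most d {0..<dim_row M} {0..<dim_col M} (\<lambda>i j. M $$ (i,j))"
proof -
  interpret vec_space "TYPE(real)" "dim_row M" .
  obtain U V where "\<forall>i<dim_row M. \<forall>j<dim_col M. M $$ (i,j) = (\<Sum>l<rank M. U i l * V l j)"
    using rank_factorization[OF carrier_matI] by blast
  then have "rank_at_most (mrank M) {0..<dim_row M} {0..<dim_col M} (\<lambda>i j. M $$ (i,j))"
    unfolding rank_at_most_def mrank_def by auto
  then show ?thesis using rank_at_most_mono assms by blast
qed

lemma mrank_le_of_rank_at_most: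
  assumes "rank_at_most r {..<n} {..<m} F"
  shows "mrank (mat n m (\<lambda>(i,j). F i j)) \<le> r"
proof -
  interpret vec_space "TYPE(real)" n .
  obtain U V where F: "\<forall>i<n. \<forall>j<m. F i j = (\<Sum>l<r. U i l * V l j)"
    using assms unfolding rank_at_most_def by blast
  define P where "P q = mat n m (\<lambda>(i,j). \<Sum>l<q. U i l * V l j)" for q
  have "rank (P q) \<le> q" for q
  proof (induction q)
    case 0
    have "P 0 = 0\<^sub>m n m" by (auto simp: P_def)
    then show ?case using rank_0I by simp
  next
    case (Suc q)
    define E where "E = mat n m (\<lambda>(i,j). U i q * V q j)"
    have "rank E \<le> 1"
      by (rule rank_le_1_product_entries[of E m "\<lambda>i. U i q" "\<lambda>j. V q j"]) (auto simp: E_def)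
    moreover have "rank (P q + E) \<le> rank (P q) + rank E"
      by (rule rank_subadditive) (auto simp: P_def E_def)
    moreover have "P (Suc q) = P q + E" by (auto simp: P_def E_def)
    ultimately show ?case using Suc.IH by simp
  qed
  moreover have "mat n m (\<lambda>(i,j). F i j) = P r" using F by (auto simp: P_def)
  moreover have "dim_row (P r) = n" by (simp add: P_def)
  ultimately show ?thesis unfolding mrank_def by simp
qed

definition column_constant :: "('i \<Rightarrow> 'j \<Rightarrow> 'a) \<Rightarrow> 'i set \<Rightarrow> 'j set \<Rightarrow> bool" where
  "column_constant F S T \<longleftrightarrow> (\<forall>j\<in>T. \<forall>i\<in>S. \<forall>i'\<in>S. F i j = F i' j)"

definition dense_constant_rectangle :: "('i \<Rightarrow> 'j \<Rightarrow> 'a) \<Rightarrow> 'i set \<Rightarrow> 'j set \<Rightarrow> real \<Rightarrow> bool" where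
  "dense_constant_rectangle F R C \<delta> \<longleftrightarrow>
     (\<exists>S T. S \<subseteq> R \<and> T \<subseteq> C \<and> column_constant F S T \<and> real (card R * card C) * \<delta> \<le> real (card S * card T))"

lemma dense_constant_rectangle_mono:
  assumes "dense_constant_rectangle F R C \<delta>" "\<delta>' \<le> \<delta>"
  shows "dense_constant_rectangle F R C \<delta>'"
  using assms unfolding dense_constant_rectangle_def
  by (meson mult_left_mono of_nat_0_le_iff order_trans)

lemma dense_constant_rectangle_empty:
  assumes "R = {} \<or> C = {}"
  shows "dense_constant_rectangle F R C \<delta>"
  using assms unfolding dense_constant_rectangle_def column_constant_def by force

lemma dense_constant_rectangle_trans:
  assumes "dense_constant_rectangle F S T \<delta>'" "S \<subseteq> R" "T \<subseteq> C"
    and "real (card R * card C) * \<delta> \<le> real (card S * card T)" "0 \<le> \<delta>'"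
  shows "dense_constant_rectangle F R C (\<delta> * \<delta>')"
proof -
  obtain S' T' where S'T': "S' \<subseteq> S" "T' \<subseteq> T" "column_constant F S' T'"
    "real (card S * card T) * \<delta>' \<le> real (card S' * card T')"
    using assms(1) unfolding dense_constant_rectangle_def by blast
  have "real (card R * card C) * (\<delta> * \<delta>') \<le> real (card S * card T) * \<delta>'"
    using mult_right_mono[OF assms(4,5)] by (simp add: mult.assoc)
  then show ?thesis
    using S'T' assms(2,3) unfolding dense_constant_rectangle_def by (meson order_trans)
qed

lemma dense_constant_rectangle_cong:
  assumes "dense_constant_rectangle F R C \<delta>" "\<And>i j. i \<in> R \<Longrightarrow> j \<in> C \<Longrightarrow> G i j = F i j"
  shows "dense_constant_rectangle G R C \<delta>"
  using assms unfolding dense_constant_rectangle_def column_constant_def by (metis subsetD)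

lemma dense_constant_rectangle_reindex:
  assumes "dense_constant_rectangle (\<lambda>i j. F (g i) (h j)) A B \<delta>"
    and "bij_betw g A R" "bij_betw h B C"
  shows "dense_constant_rectangle F R C \<delta>"
proof -
  obtain S T where ST: "S \<subseteq> A" "T \<subseteq> B" "column_constant (\<lambda>i j. F (g i) (h j)) S T"
    "real (card A * card B) * \<delta> \<le> real (card S * card T)"
    using assms(1) unfolding dense_constant_rectangle_def by blast
  have "card (g ` S) = card S" "card (h ` T) = card T"
    using ST(1,2) assms(2,3) by (auto intro: card_image inj_on_subset simp: bij_betw_def)
  moreover have "card A = card R" "card B = card C"
    using assms(2,3) by (auto simp: bij_betw_same_card)
  moreover have "column_constant F (g ` S) (h ` T)"
    using ST(3) unfolding column_constant_def by blast
  moreover have "g ` S \<subseteq> R" "h ` T \<subseteq> C"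
    using ST(1,2) assms(2,3) by (auto simp: bij_betw_def)
  ultimately show ?thesis
    using ST(4) unfolding dense_constant_rectangle_def by metis
qed

lemma dense_constant_rectangle_whole:
  "column_constant F R C \<Longrightarrow> dense_constant_rectangle F R C 1"
  unfolding dense_constant_rectangle_def by (intro exI[of _ R] exI[of _ C]) simp

definition boolean_rectangle_bound :: "(nat \<Rightarrow> real) \<Rightarrow> bool" where
  "boolean_rectangle_bound e \<longleftrightarrow>
     (\<forall>D (R :: nat set) (C :: nat set) (F :: nat \<Rightarrow> nat \<Rightarrow> real). 2 \<le> D \<longrightarrow> finite R \<longrightarrow> finite C \<longrightarrow>
        (\<forall>i\<in>R. \<forall>j\<in>C. F i j \<in> {0, 1}) \<longrightarrow> rank_at_most D R C F \<longrightarrow>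
        dense_constant_rectangle F R C (2 powr - e D))"

lemma boolean_rectangle_boundD:
  fixes F :: "nat \<Rightarrow> nat \<Rightarrow> real"
  assumes "boolean_rectangle_bound e" "2 \<le> D" "finite R" "finite C"
    and "\<forall>i\<in>R. \<forall>j\<in>C. F i j \<in> {0, 1}" "rank_at_most D R C F"
  shows "dense_constant_rectangle F R C (2 powr - e D)"
  using assms unfolding boolean_rectangle_bound_def by blast

lemma column_constant_comp_inj:
  "column_constant (\<lambda>i j. f (F i j)) S T \<Longrightarrow> inj f \<Longrightarrow> column_constant F S T"
  unfolding column_constant_def by (meson injD)

lemma dense_constant_rectangle_comp_inj:
  assumes "dense_constant_rectangle (\<lambda>i j. f (F i j)) R C \<delta>" "inj f"
  shows "dense_constant_rectangle F R C \<delta>"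
  using assms column_constant_comp_inj unfolding dense_constant_rectangle_def by blast

lemma dense_constant_rectangle_halve:
  assumes "dense_constant_rectangle F S T' \<delta>'" "0 \<le> \<delta>'" "S \<subseteq> R" "T' \<subseteq> T" "T \<subseteq> C"
    and "real (card R * card C) * (2 * \<delta>) \<le> real (card S * card T)" "card T \<le> 2 * card T'"
  shows "dense_constant_rectangle F R C (\<delta> * \<delta>')"
proof -
  have "real (card R * card C) * (2 * \<delta>) \<le> real (card S) * real (card T)"
    using assms(6) by simp
  also have "\<dots> \<le> real (card S) * (2 * real (card T'))"
    using assms(7) by (intro mult_left_mono) auto
  finally have "real (card R * card C) * \<delta> \<le> real (card S * card T')" by simp
  then show ?thesis
    using dense_constant_rectangle_trans[OF assms(1,3)] assms(2,4,5) by blast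
qed

lemma card_image_less_if_avoids:
  assumes "finite R" "S \<subseteq> R" "x \<in> f ` R" "x \<notin> f ` S"
  shows "card (f ` S) < card (f ` R)"
  using assms by (intro psubset_card_mono) auto

lemma dense_constant_rectangle_eq_value:
  fixes F :: "nat \<Rightarrow> nat \<Rightarrow> real"
  assumes e: "boolean_rectangle_bound e" and d: "1 \<le> d" and fin: "finite R" "finite C"
    and rank: "rank_at_most d R C F" and v: "\<And>j. j \<in> C \<Longrightarrow> v j \<in> (\<lambda>i. F i j) ` R"
    and col_values: "\<And>j. j \<in> C \<Longrightarrow> card ((\<lambda>i. F i j) ` R) \<le> Suc k"
  shows "dense_constant_rectangle (\<lambda>i j. F i j = v j) R C (2 powr - e (Suc d ^ Suc k))"
proof -
  define B where "B i j = (if F i j = v j then 1 else 0 :: real)" for i j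
  have "rank_at_most (Suc d ^ k) R C B"
    unfolding B_def using rank fin(1) v col_values by (rule rank_at_most_eq_indicator)
  \<comment> \<open>Exponent Suc k rather than k: the Boolean hypothesis needs rank bound D \<ge> 2, also for k = 0.\<close>
  then have "rank_at_most (Suc d ^ Suc k) R C B"
    by (rule rank_at_most_mono) simp
  moreover have "2 \<le> Suc d ^ Suc k"
    using d power_increasing[of 1 "Suc k" "Suc d"] by simp
  moreover have "\<forall>i\<in>R. \<forall>j\<in>C. B i j \<in> {0, 1}" by (simp add: B_def)
  ultimately have "dense_constant_rectangle B R C (2 powr - e (Suc d ^ Suc k))"
    using boolean_rectangle_boundD[OF e _ fin] by blast
  moreover have "inj (\<lambda>b. if b then 1 else 0 :: real)" by (rule injI) (simp split: if_splits)
  ultimately show ?thesis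
    unfolding B_def by (rule dense_constant_rectangle_comp_inj)
qed

lemma column_constant_eq_value_half:
  assumes cc: "column_constant (\<lambda>i j. F i j = v j) S T" and fin: "finite T" and "\<delta> \<le> 1"
    and avoiding: "\<And>T0. T0 \<subseteq> T \<Longrightarrow> (\<And>j. j \<in> T0 \<Longrightarrow> v j \<notin> (\<lambda>i. F i j) ` S) \<Longrightarrow>
      dense_constant_rectangle F S T0 \<delta>"
  obtains T' where "T' \<subseteq> T" "card T \<le> 2 * card T'" "dense_constant_rectangle F S T' \<delta>"
proof -
  define T1 where "T1 = {j \<in> T. \<forall>i\<in>S. F i j = v j}"
  have T1T: "T1 \<subseteq> T" by (auto simp: T1_def)
  show ?thesis
  proof (cases "card T \<le> 2 * card T1")
    case True
    have "column_constant F S T1" unfolding T1_def column_constant_def by simp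
    then have "dense_constant_rectangle F S T1 \<delta>"
      by (rule dense_constant_rectangle_mono[OF dense_constant_rectangle_whole]) fact
    then show ?thesis using that[of T1] True T1T by blast
  next
    case False
    have "card (T - T1) = card T - card T1"
      using card_Diff_subset[OF finite_subset[OF T1T fin] T1T] .
    then have "card T \<le> 2 * card (T - T1)" using False card_mono[OF fin T1T] by linarith
    moreover have "v j \<notin> (\<lambda>i. F i j) ` S" if j: "j \<in> T - T1" for j
    proof
      assume "v j \<in> (\<lambda>i. F i j) ` S"
      then obtain i where i: "i \<in> S" "F i j = v j" by auto
      obtain i' where i': "i' \<in> S" "F i' j \<noteq> v j" using j by (auto simp: T1_def)
      have "(F i j = v j) = (F i' j = v j)"
        using cc j i(1) i'(1) unfolding column_constant_def by (meson DiffD1)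
      then show False using i i' by simp
    qed
    then have "dense_constant_rectangle F S (T - T1) \<delta>" by (intro avoiding) auto
    ultimately show ?thesis using that[of "T - T1"] by blast
  qed
qed

lemma dense_constant_rectangle_listable:
  fixes F :: "nat \<Rightarrow> nat \<Rightarrow> real"
  assumes e: "boolean_rectangle_bound e" and d: "1 \<le> d" and \<delta>: "0 \<le> \<delta>" "\<delta> \<le> 1"
  shows "(\<And>j. 1 \<le> j \<Longrightarrow> j \<le> k \<Longrightarrow> 2 * \<delta> \<le> 2 powr - e (Suc d ^ j)) \<Longrightarrow>
    finite R \<Longrightarrow> finite C \<Longrightarrow> rank_at_most d R C F \<Longrightarrow>
    (\<And>j. j \<in> C \<Longrightarrow> card ((\<lambda>i. F i j) ` R) \<le> k) \<Longrightarrow>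
    dense_constant_rectangle F R C (\<delta> ^ k)"
proof (induction k arbitrary: R C)
  case 0
  have "R = {}" if "j \<in> C" for j using "0.prems"(2) "0.prems"(5)[OF that] by simp
  then show ?case by (intro dense_constant_rectangle_empty) blast
next
  case (Suc k)
  show ?case
  proof (cases "R = {} \<or> C = {}")
    case True
    then show ?thesis by (rule dense_constant_rectangle_empty)
  next
    case False
    then obtain i0 where i0: "i0 \<in> R" by blast
    define v where "v j = F i0 j" for j
    have "dense_constant_rectangle (\<lambda>i j. F i j = v j) R C (2 powr - e (Suc d ^ Suc k))"
      using i0 by (intro dense_constant_rectangle_eq_value[OF e d Suc.prems(2-4) _ Suc.prems(5)])
        (auto simp: v_def)
    then have "dense_constant_rectangle (\<lambda>i j. F i j = v j) R C (2 * \<delta>)"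
      using Suc.prems(1)[of "Suc k"] by (auto intro: dense_constant_rectangle_mono)
    then obtain S T where ST: "S \<subseteq> R" "T \<subseteq> C" "column_constant (\<lambda>i j. F i j = v j) S T"
      "real (card R * card C) * (2 * \<delta>) \<le> real (card S * card T)"
      unfolding dense_constant_rectangle_def by blast
    have fin: "finite S" "finite T" using ST(1,2) Suc.prems(2,3) finite_subset by auto
    obtain T' where T': "T' \<subseteq> T" "card T \<le> 2 * card T'" "dense_constant_rectangle F S T' (\<delta> ^ k)"
    proof (rule column_constant_eq_value_half[OF ST(3) fin(2)])
      show "\<delta> ^ k \<le> 1" using \<delta> by (simp add: power_le_one)
      fix T0 assume T0: "T0 \<subseteq> T" and avoid: "\<And>j. j \<in> T0 \<Longrightarrow> v j \<notin> (\<lambda>i. F i j) ` S"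
      show "dense_constant_rectangle F S T0 (\<delta> ^ k)"
      proof (rule Suc.IH)
        show "rank_at_most d S T0 F"
          using rank_at_most_subset[OF Suc.prems(4) ST(1)] T0 ST(2) by blast
        show "card ((\<lambda>i. F i j) ` S) \<le> k" if j: "j \<in> T0" for j
          using card_image_less_if_avoids[OF Suc.prems(2) ST(1) _ avoid[OF j]] i0
            Suc.prems(5)[of j] j T0 ST(2) by (force simp: v_def)
      qed (use Suc.prems(1) fin T0 finite_subset in auto)
    qed
    have "dense_constant_rectangle F R C (\<delta> * \<delta> ^ k)"
      using dense_constant_rectangle_halve[OF T'(3) _ ST(1) T'(1) ST(2) ST(4) T'(2)] \<delta>(1) by simp
    then show ?thesis by simp
  qed
qed

lemma dense_constant_rectangle_mat_iff:
  "dense_constant_rectangle (\<lambda>i j. M $$ (i, j)) {0..<dim_row M} {0..<dim_col M} \<delta> \<longleftrightarrow>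
   (\<exists>S T. S \<subseteq> {0..<dim_row M} \<and> T \<subseteq> {0..<dim_col M} \<and> sub_listable1 M S T \<and>
      real (card S * card T) \<ge> real (dim_row M * dim_col M) * \<delta>)"
  unfolding dense_constant_rectangle_def column_constant_def sub_listable1_def by simp

lemma listable_card_col_values:
  assumes "listable k M" "j < dim_col M"
  shows "card ((\<lambda>i. M $$ (i, j)) ` {0..<dim_row M}) \<le> k"
proof -
  have "(\<lambda>i. M $$ (i, j)) ` {0..<dim_row M} = {M $$ (i, j) | i. i < dim_row M}" by auto
  then show ?thesis using assms unfolding listable_def by simp
qed

lemma dense_constant_rectangle_of_mat:
  assumes "dense_constant_rectangle (\<lambda>i j. M $$ (i, j)) {0..<dim_row M} {0..<dim_col M} \<delta>"
    and M: "M = mat (card R) (card C) (\<lambda>(i, j). F (g i) (h j))"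
    and g: "bij_betw g {0..<card R} R" and h: "bij_betw h {0..<card C} C"
  shows "dense_constant_rectangle F R C \<delta>"
proof -
  have "dense_constant_rectangle (\<lambda>i j. M $$ (i, j)) {0..<card R} {0..<card C} \<delta>"
    using assms(1) by (simp add: M)
  then have "dense_constant_rectangle (\<lambda>i j. F (g i) (h j)) {0..<card R} {0..<card C} \<delta>"
    by (rule dense_constant_rectangle_cong) (simp add: M)
  then show ?thesis by (rule dense_constant_rectangle_reindex[OF _ g h])
qed

lemma boolean_rectangle_bound_of_mat:
  assumes H: "\<And>d M. 2 \<le> d \<Longrightarrow> 1 \<le> dim_row M \<Longrightarrow> 1 \<le> dim_col M \<Longrightarrow> boolean_mat M \<Longrightarrow>
    mrank M \<le> d \<Longrightarrow> dense_constant_rectangle (\<lambda>i j. M $$ (i, j)) {0..<dim_row M} {0..<dim_col M} (2 powr - e d)"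
  shows "boolean_rectangle_bound e"
  unfolding boolean_rectangle_bound_def
proof (intro allI impI)
  fix D and R C :: "nat set" and F :: "nat \<Rightarrow> nat \<Rightarrow> real"
  assume D: "2 \<le> D" and fin: "finite R" "finite C" and bool: "\<forall>i\<in>R. \<forall>j\<in>C. F i j \<in> {0, 1}"
    and rank: "rank_at_most D R C F"
  show "dense_constant_rectangle F R C (2 powr - e D)"
  proof (cases "R = {} \<or> C = {}")
    case True
    then show ?thesis by (rule dense_constant_rectangle_empty)
  next
    case False
    obtain g h where g: "bij_betw g {0..<card R} R" and h: "bij_betw h {0..<card C} C"
      using ex_bij_betw_nat_finite fin by metis
    define M where "M = mat (card R) (card C) (\<lambda>(i, j). F (g i) (h j))"
    have dims: "dim_row M = card R" "dim_col M = card C" by (simp_all add: M_def)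
    have entries: "M $$ (i, j) = F (g i) (h j)" if "i \<in> {0..<card R}" "j \<in> {0..<card C}" for i j
      using that by (simp add: M_def)
    have "1 \<le> dim_row M" "1 \<le> dim_col M"
      using False fin by (simp_all add: dims Suc_le_eq card_gt_0_iff)
    moreover have "boolean_mat M"
      unfolding boolean_mat_def dims
    proof (intro allI impI)
      fix i j assume ij: "i < card R" "j < card C"
      then have "g i \<in> R" "h j \<in> C" using bij_betwE[OF g] bij_betwE[OF h] by auto
      then show "M $$ (i, j) \<in> {0, 1}" using bool entries ij by simp
    qed
    moreover have "rank_at_most D {..<card R} {..<card C} (\<lambda>i j. F (g i) (h j))"
      using g h by (intro rank_at_most_reindex[OF rank]) (auto simp: bij_betw_def atLeast0LessThan)
    then have "mrank M \<le> D" unfolding M_def by (rule mrank_le_of_rank_at_most)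
    ultimately have "dense_constant_rectangle (\<lambda>i j. M $$ (i, j)) {0..<dim_row M} {0..<dim_col M} (2 powr - e D)"
      by (rule H[OF D])
    then show ?thesis using M_def g h by (rule dense_constant_rectangle_of_mat)
  qed
qed

lemma poly_le_abs_coeffs_power:
  fixes p :: "real poly"
  assumes "1 \<le> y"
  shows "poly p y \<le> (\<Sum>i\<le>degree p. \<bar>coeff p i\<bar>) * y ^ degree p"
proof -
  have "poly p y = (\<Sum>i\<le>degree p. coeff p i * y ^ i)" by (simp add: poly_altdef)
  also have "\<dots> \<le> (\<Sum>i\<le>degree p. \<bar>coeff p i\<bar> * y ^ degree p)"
  proof (rule sum_mono)
    fix i assume "i \<in> {..degree p}"
    then have "y ^ i \<le> y ^ degree p" using assms by (intro power_increasing) auto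
    moreover have "coeff p i \<le> \<bar>coeff p i\<bar>" by simp
    ultimately show "coeff p i * y ^ i \<le> \<bar>coeff p i\<bar> * y ^ degree p"
      using assms by (intro mult_mono) auto
  qed
  also have "\<dots> = (\<Sum>i\<le>degree p. \<bar>coeff p i\<bar>) * y ^ degree p" by (simp add: sum_distrib_right)
  finally show ?thesis .
qed

lemma poly_dominated_by_monom:
  fixes p :: "real poly"
  assumes "0 \<le> c"
  shows "\<exists>q. \<forall>x y. 1 \<le> x \<longrightarrow> 1 \<le> y \<longrightarrow> y \<le> c * x \<longrightarrow> 0 \<le> poly q x \<and> poly p y + 1 \<le> poly q x"
proof -
  define A where "A = (\<Sum>i\<le>degree p. \<bar>coeff p i\<bar>)"
  define N where "N = degree p"
  have A: "0 \<le> A" unfolding A_def by (intro sum_nonneg) auto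
  have "0 \<le> poly (monom (1 + A * c ^ N) N) x \<and> poly p y + 1 \<le> poly (monom (1 + A * c ^ N) N) x"
    if x: "1 \<le> x" and y: "1 \<le> y" "y \<le> c * x" for x y
  proof -
    have "poly p y \<le> A * y ^ N" using poly_le_abs_coeffs_power[OF y(1)] by (simp add: A_def N_def)
    also have "\<dots> \<le> A * (c * x) ^ N" using A y by (intro mult_left_mono power_mono) auto
    also have "\<dots> = A * c ^ N * x ^ N" by (simp add: power_mult_distrib)
    finally have "poly p y + 1 \<le> A * c ^ N * x ^ N + x ^ N"
      using one_le_power[OF x, of N] by linarith
    moreover have "0 \<le> A * c ^ N * x ^ N" using A assms x by simp
    ultimately show ?thesis using one_le_power[OF x, of N] by (simp add: poly_monom algebra_simps)
  qed
  then show ?thesis by blast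
qed

lemma log_Suc_power_bounds:
  assumes "2 \<le> d" "1 \<le> j"
  shows "1 \<le> log 2 (real (Suc d ^ j))" "log 2 (real (Suc d ^ j)) \<le> 2 * real j * log 2 (real d)"
proof -
  have eq: "log 2 (real (Suc d ^ j)) = real j * log 2 (real (Suc d))" by (simp add: log_nat_power)
  have "1 \<le> log 2 (real (Suc d))" using assms(1) by simp
  with assms(2) have "1 * 1 \<le> real j * log 2 (real (Suc d))" by (intro mult_mono) auto
  then show "1 \<le> log 2 (real (Suc d ^ j))" unfolding eq by simp
  have "log 2 (real (Suc d)) \<le> log 2 (2 * real d)" using assms(1) by simp
  also have "\<dots> = 1 + log 2 (real d)" using assms(1) by (simp add: log_mult)
  also have "\<dots> \<le> 2 * log 2 (real d)" using assms(1) by simp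
  finally have "log 2 (real (Suc d)) \<le> 2 * log 2 (real d)" .
  from mult_left_mono[OF this, of "real j"]
  show "log 2 (real (Suc d ^ j)) \<le> 2 * real j * log 2 (real d)"
    unfolding eq by (simp add: mult_ac)
qed

lemma listable_mat_dense_constant_rectangle:
  assumes e: "boolean_rectangle_bound (\<lambda>D. poly p (log 2 D))"
    and q: "\<And>x y. 1 \<le> x \<Longrightarrow> 1 \<le> y \<Longrightarrow> y \<le> 2 * real k * x \<Longrightarrow>
      0 \<le> poly q x \<and> poly p y + 1 \<le> poly q x"
    and k: "1 \<le> k" and d: "2 \<le> d" and M: "listable k M" "mrank M \<le> d"
  shows "dense_constant_rectangle (\<lambda>i j. M $$ (i, j)) {0..<dim_row M} {0..<dim_col M}
      (2 powr - poly (Polynomial.smult (real k) q) (log 2 d))"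
proof -
  define x where "x = log 2 (real d)"
  have x: "1 \<le> x" using d by (simp add: x_def)
  have \<delta>: "2 * 2 powr - poly q x \<le> 2 powr - poly p (log 2 (real (Suc d ^ j)))"
    if j: "1 \<le> j" "j \<le> k" for j
  proof -
    have "2 * real j * x \<le> 2 * real k * x" using j(2) x by (intro mult_right_mono) auto
    then have "log 2 (real (Suc d ^ j)) \<le> 2 * real k * x"
      using log_Suc_power_bounds(2)[OF d j(1)] by (simp add: x_def)
    then have "poly p (log 2 (real (Suc d ^ j))) + 1 \<le> poly q x"
      using q[OF x log_Suc_power_bounds(1)[OF d j(1)]] by blast
    have "2 * 2 powr - poly q x = 2 powr (1 + - poly q x)" by (simp only: powr_add powr_one)
    also have "\<dots> \<le> 2 powr - poly p (log 2 (real (Suc d ^ j)))"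
      by (rule powr_mono) (use \<open>poly p _ + 1 \<le> poly q x\<close> in simp_all)
    finally show ?thesis .
  qed
  have "dense_constant_rectangle (\<lambda>i j. M $$ (i, j)) {0..<dim_row M} {0..<dim_col M}
      ((2 powr - poly q x) ^ k)"
  proof (rule dense_constant_rectangle_listable[OF e])
    show "2 powr - poly q x \<le> 1"
      using q[OF x x] x k powr_mono[of "- poly q x" 0 2] by simp
    show "rank_at_most d {0..<dim_row M} {0..<dim_col M} (\<lambda>i j. M $$ (i, j))"
      using M(2) by (rule rank_at_most_of_mrank)
    show "card ((\<lambda>i. M $$ (i, j)) ` {0..<dim_row M}) \<le> k" if "j \<in> {0..<dim_col M}" for j
      using M(1) that by (simp add: listable_card_col_values)
  qed (use d \<delta> in simp_all)
  moreover have "(2 powr - poly q x) ^ k = 2 powr - poly (Polynomial.smult (real k) q) x"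
    by (simp add: powr_power)
  ultimately show ?thesis by (simp add: x_def)
qed

theorem theorem2p10:
  assumes "\<exists>p2 :: real poly. \<forall>d::nat. d \<ge> 2 \<longrightarrow>
      (\<forall>M :: real mat. dim_row M \<ge> 1 \<longrightarrow> dim_col M \<ge> 1 \<longrightarrow> boolean_mat M \<longrightarrow> mrank M \<le> d \<longrightarrow>
        (\<exists>S T. S \<subseteq> {0..<dim_row M} \<and> T \<subseteq> {0..<dim_col M} \<and> sub_listable1 M S T \<and>
           real (card S * card T) \<ge> real (dim_row M * dim_col M) * 2 powr (- poly p2 (log 2 d))))"
    and "(k::nat) \<ge> 2"
  shows "\<exists>pk :: real poly. \<forall>d::nat. d \<ge> 2 \<longrightarrow>
      (\<forall>M :: real mat. dim_row M \<ge> 1 \<longrightarrow> dim_col M \<ge> 1 \<longrightarrow> listable k M \<longrightarrow> mrank M \<le> d \<longrightarrow>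
        (\<exists>S T. S \<subseteq> {0..<dim_row M} \<and> T \<subseteq> {0..<dim_col M} \<and> sub_listable1 M S T \<and>
           real (card S * card T) \<ge> real (dim_row M * dim_col M) * 2 powr (- poly pk (log 2 d))))"
proof -
  obtain p2 :: "real poly" where "\<forall>d::nat. 2 \<le> d \<longrightarrow> (\<forall>M. 1 \<le> dim_row M \<longrightarrow> 1 \<le> dim_col M \<longrightarrow>
      boolean_mat M \<longrightarrow> mrank M \<le> d \<longrightarrow> dense_constant_rectangle (\<lambda>i j. M $$ (i, j))
        {0..<dim_row M} {0..<dim_col M} (2 powr - poly p2 (log 2 d)))"
    using assms(1) unfolding dense_constant_rectangle_mat_iff by blast
  then have e: "boolean_rectangle_bound (\<lambda>D. poly p2 (log 2 D))"
    by (intro boolean_rectangle_bound_of_mat) blast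
  obtain q where "\<And>x y. 1 \<le> x \<Longrightarrow> 1 \<le> y \<Longrightarrow> y \<le> 2 * real k * x \<Longrightarrow>
      0 \<le> poly q x \<and> poly p2 y + 1 \<le> poly q x"
    using poly_dominated_by_monom[of "2 * real k" p2] by auto
  then have "dense_constant_rectangle (\<lambda>i j. M $$ (i, j)) {0..<dim_row M} {0..<dim_col M}
      (2 powr - poly (Polynomial.smult (real k) q) (log 2 d))"
    if "2 \<le> d" "listable k M" "mrank M \<le> d" for d M
    using listable_mat_dense_constant_rectangle[OF e] assms(2) that by simp
  then show ?thesis unfolding dense_constant_rectangle_mat_iff by blast
qed

end
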